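(* Let $M\in\mathbb R^{n\times n}$ be sufficient and let the affine subspace $S=\{q+Q\theta:\theta\in\mathbb R^d\}$ lie in general position. Then for any two distinct complementary bases $B_1,B_2$, the relative interiors of the critical domains $S_{B_1}$ and $S_{B_2}$ are disjoint.
   Context: Let $M\in\mathbb R^{n\times n}$ and $A=[\,I\;\;-M\,]\in\mathbb R^{n\times 2n}$, columns indexed by $\{1,\dots,2n\}$; $A_{\cdot J}$ is the submatrix of columns indexed by $J$. Complementary index: $\bar i=i+n$ if $i\le n$, $\bar i=i-n$ if $i>n$. A set $J$ is complementary if $i\in J\Rightarrow\bar i\notin J$. A complementary basis is a complementary set $B$ with $|B|=n$ and $A_{\cdot B}$ invertible. Complementary cone: $\mathcal C(J)=\{A_{\cdot J}\lambda:\lambda\ge0\}$. Let $Q\in\mathbb R^{n\times d}$ have rank $d$, $q\in\mathbb R^n$, and $S=\{q+Q\theta:\theta\in\mathbb R^d\}$. The critical domain of a complementary basis $B$ is $S_B=\mathcal C(B)\cap S$. $S$ lies in general position if for every complementary basis $B$: $S\cap\mathcal C(B)\neq\emptyset$ implies $S\cap\operatorname{int}\mathcal C(B)\neq\emptyset$. $M$ is column sufficient if $[z_i(Mz)_i\le 0\ \forall i]\Rightarrow[z_i(Mz)_i=0\ \forall i]$; row sufficient if $M^T$ is column sufficient; sufficient if both. *)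

theory Defs
  imports "HOL-Analysis.Analysis"
begin

text \<open>Columns of A = [I, -M] are indexed by the disjoint sum 'n + 'n:
  Inl i is column i (i <= n), Inr i is column i + n.\<close>

definition Acol :: "real^'n^'n \<Rightarrow> ('n + 'n) \<Rightarrow> real^'n" where
  "Acol M j = (case j of Inl i \<Rightarrow> axis i 1 | Inr i \<Rightarrow> - column i M)"

definition compl_idx :: "('n + 'n) \<Rightarrow> ('n + 'n)" where
  "compl_idx j = (case j of Inl i \<Rightarrow> Inr i | Inr i \<Rightarrow> Inl i)"

definition complementary :: "('n + 'n) set \<Rightarrow> bool" where
  "complementary J \<longleftrightarrow> (\<forall>i\<in>J. compl_idx i \<notin> J)"

definition sub_invertible :: "real^'n^'n \<Rightarrow> ('n + 'n) set \<Rightarrow> bool" where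
  "sub_invertible M B \<longleftrightarrow> card B = CARD('n) \<and>
     (\<forall>c :: ('n + 'n) \<Rightarrow> real. (\<Sum>j\<in>B. c j *\<^sub>R Acol M j) = 0 \<longrightarrow> (\<forall>j\<in>B. c j = 0))"

definition compl_basis :: "real^'n^'n \<Rightarrow> ('n + 'n) set \<Rightarrow> bool" where
  "compl_basis M B \<longleftrightarrow> complementary B \<and> sub_invertible M B"

definition compl_cone :: "real^'n^'n \<Rightarrow> ('n + 'n) set \<Rightarrow> (real^'n) set" where
  "compl_cone M J = {(\<Sum>j\<in>J. c j *\<^sub>R Acol M j) | c. \<forall>j\<in>J. c j \<ge> 0}"

definition param_space :: "real^'n \<Rightarrow> real^'d^'n \<Rightarrow> (real^'n) set" where
  "param_space q Q = {q + Q *v \<theta> | \<theta>. True}"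

definition critical_domain :: "real^'n^'n \<Rightarrow> real^'n \<Rightarrow> real^'d^'n \<Rightarrow> ('n + 'n) set \<Rightarrow> (real^'n) set" where
  "critical_domain M q Q B = compl_cone M B \<inter> param_space q Q"

definition general_position :: "real^'n^'n \<Rightarrow> real^'n \<Rightarrow> real^'d^'n \<Rightarrow> bool" where
  "general_position M q Q \<longleftrightarrow> (\<forall>B. compl_basis M B \<longrightarrow>
      param_space q Q \<inter> compl_cone M B \<noteq> {} \<longrightarrow>
      param_space q Q \<inter> interior (compl_cone M B) \<noteq> {})"

definition column_sufficient :: "real^'n^'n \<Rightarrow> bool" where
  "column_sufficient M \<longleftrightarrow> (\<forall>z. (\<forall>i. z $ i * (M *v z) $ i \<le> 0) \<longrightarrow> (\<forall>i. z $ i * (M *v z) $ i = 0))"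

definition row_sufficient :: "real^'n^'n \<Rightarrow> bool" where
  "row_sufficient M \<longleftrightarrow> column_sufficient (transpose M)"

definition sufficient :: "real^'n^'n \<Rightarrow> bool" where
  "sufficient M \<longleftrightarrow> column_sufficient M \<and> row_sufficient M"

end

theory Submission
  imports Defs
begin

text \<open>
  Write a point of a complementary cone C(B) as w - M z with
  w = coefficients on the identity columns in B and z = coefficients on the
  columns of -M in B; complementarity of B gives w_i z_i = 0.

  (1) General position forces the relative interior of a nonempty critical
      domain S_B = C(B) \<inter> S into the interior of C(B), since C(B) then has
      nonempty interior and S is affine (rel_interior of an intersection).
  (2) A point of int C(B) is a combination of the columns in B with
      strictly positive coefficients.
  (3) Column sufficiency: if w1 - M z1 = w2 - M z2 for two nonnegative
      complementary pairs, then also z1_i w2_i = 0 and z2_i w1_i = 0 for all i.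
  (4) Hence two strictly positive representations of one point over
      complementary bases B1, B2 force B1 = B2.
  A common point of both relative interiors therefore contradicts B1 \<noteq> B2.
\<close>

lemma affine_param_space:
  fixes Q :: "real^'d^'n" and q :: "real^'n"
  shows "affine (param_space q Q)"
proof (unfold affine_def, intro ballI allI impI)
  fix x y :: "real^'n" and u v :: real
  assume "x \<in> param_space q Q" "y \<in> param_space q Q" and uv: "u + v = 1"
  then obtain a b where a: "x = q + Q *v a" and b: "y = q + Q *v b"
    unfolding param_space_def by blast
  have "u *\<^sub>R (q + Q *v a) + v *\<^sub>R (q + Q *v b)
      = (u + v) *\<^sub>R q + (u *\<^sub>R (Q *v a) + v *\<^sub>R (Q *v b))"
    by (simp add: algebra_simps)
  also have "\<dots> = q + Q *v (u *\<^sub>R a + v *\<^sub>R b)"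
    using uv by (simp add: matrix_vector_right_distrib matrix_vector_mult_scaleR)
  finally show "u *\<^sub>R x + v *\<^sub>R y \<in> param_space q Q"
    unfolding param_space_def a b by blast
qed

lemma convex_compl_cone:
  fixes M :: "real^'n^'n" and J :: "('n + 'n) set"
  shows "convex (compl_cone M J)"
  unfolding convex_def compl_cone_def
proof clarify
  fix u v :: real and c d :: "('n + 'n) \<Rightarrow> real"
  assume h: "0 \<le> u" "0 \<le> v" "\<forall>j\<in>J. 0 \<le> c j" "\<forall>j\<in>J. 0 \<le> d j"
  have "u *\<^sub>R (\<Sum>j\<in>J. c j *\<^sub>R Acol M j) + v *\<^sub>R (\<Sum>j\<in>J. d j *\<^sub>R Acol M j)
      = (\<Sum>j\<in>J. (u * c j + v * d j) *\<^sub>R Acol M j)"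
    by (simp add: scaleR_sum_right sum.distrib[symmetric] scaleR_add_left)
  moreover have "\<forall>j\<in>J. 0 \<le> u * c j + v * d j" using h by simp
  ultimately show "\<exists>e. u *\<^sub>R (\<Sum>j\<in>J. c j *\<^sub>R Acol M j) + v *\<^sub>R (\<Sum>j\<in>J. d j *\<^sub>R Acol M j)
      = (\<Sum>j\<in>J. e j *\<^sub>R Acol M j) \<and> (\<forall>j\<in>J. 0 \<le> e j)"
    by (intro exI[of _ "\<lambda>j. u * c j + v * d j"]) simp
qed

lemma rel_interior_critical_domain_subset:
  fixes M :: "real^'n^'n" and Q :: "real^'d^'n" and q :: "real^'n"
  assumes "general_position M q Q" and "compl_basis M B"
  shows "rel_interior (critical_domain M q Q B) \<subseteq> interior (compl_cone M B)"
proof (cases "param_space q Q \<inter> compl_cone M B = {}")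
  case True
  then show ?thesis unfolding critical_domain_def using rel_interior_subset by blast
next
  case False
  then obtain x where x: "x \<in> param_space q Q" "x \<in> interior (compl_cone M B)"
    using assms unfolding general_position_def by blast
  have ri_cone: "rel_interior (compl_cone M B) = interior (compl_cone M B)"
    using x(2) rel_interior_nonempty_interior by blast
  have ri_space: "rel_interior (param_space q Q) = param_space q Q"
    by (rule rel_interior_affine[OF affine_param_space])
  have "rel_interior (critical_domain M q Q B)
      = rel_interior (compl_cone M B) \<inter> rel_interior (param_space q Q)"
    unfolding critical_domain_def
    by (rule convex_rel_interior_inter_two[OF convex_compl_cone
          affine_imp_convex[OF affine_param_space]])
       (use x ri_cone ri_space in blast)
  then show ?thesis using ri_cone by blast
qed

text \<open>Step (2): an interior point of a cone is a strictly positive combination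
  of its generators (shift back along the sum of the generators).\<close>
lemma interior_compl_cone_pos:
  fixes M :: "real^'n^'n" and J :: "('n + 'n) set"
  assumes "x \<in> interior (compl_cone M J)"
  obtains c where "x = (\<Sum>j\<in>J. c j *\<^sub>R Acol M j)" and "\<forall>j\<in>J. c j > 0"
proof -
  obtain e where e: "e > 0" "ball x e \<subseteq> compl_cone M J"
    using assms mem_interior by blast
  define v where "v = (\<Sum>j\<in>J. Acol M j)"
  have denom: "0 < 2 * (norm v + 1)" by (smt (verit) norm_ge_zero)
  define t where "t = e / (2 * (norm v + 1))"
  have t: "t > 0" unfolding t_def using denom e(1) by (simp only: divide_pos_pos)
  have "norm (t *\<^sub>R v) = t * norm v" using t by simp
  also have "\<dots> < t * (2 * (norm v + 1))"
    by (rule mult_strict_left_mono[OF _ t]) (smt (verit) norm_ge_zero)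
  also have "\<dots> = e" unfolding t_def using denom by simp
  finally have "x - t *\<^sub>R v \<in> compl_cone M J"
    using e by (auto simp: dist_norm)
  then obtain c where c: "x - t *\<^sub>R v = (\<Sum>j\<in>J. c j *\<^sub>R Acol M j)" "\<forall>j\<in>J. c j \<ge> 0"
    unfolding compl_cone_def by blast
  have "x = (\<Sum>j\<in>J. c j *\<^sub>R Acol M j) + t *\<^sub>R v" using c(1) by (simp add: algebra_simps)
  also have "\<dots> = (\<Sum>j\<in>J. (c j + t) *\<^sub>R Acol M j)"
    unfolding v_def by (simp add: scaleR_sum_right sum.distrib scaleR_add_left)
  finally show ?thesis using that c(2) t by (metis add_nonneg_pos)
qed

definition w_part :: "('n + 'n) set \<Rightarrow> (('n + 'n) \<Rightarrow> real) \<Rightarrow> real^'n" where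
  "w_part B c = (\<chi> i. if Inl i \<in> B then c (Inl i) else 0)"

definition z_part :: "('n + 'n) set \<Rightarrow> (('n + 'n) \<Rightarrow> real) \<Rightarrow> real^'n" where
  "z_part B c = (\<chi> i. if Inr i \<in> B then c (Inr i) else 0)"

lemma sum_axis: "(\<Sum>i\<in>UNIV. a i *\<^sub>R (axis i (1::real) :: real^'n)) = (\<chi> i. a i)"
proof (subst vec_eq_iff, intro allI)
  fix k :: 'n
  have "(\<Sum>i\<in>UNIV. a i * (if k = i then 1 else 0)) = (\<Sum>i\<in>UNIV. if k = i then a i else 0)"
    by (rule sum.cong) auto
  then show "(\<Sum>i\<in>UNIV. a i *\<^sub>R (axis i (1::real) :: real^'n)) $ k = (\<chi> i. a i) $ k"
    by (simp add: axis_def)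
qed

lemma sum_Acol_eq:
  fixes M :: "real^'n^'n" and B :: "('n + 'n) set"
  shows "(\<Sum>j\<in>B. c j *\<^sub>R Acol M j) = w_part B c - M *v z_part B c"
proof -
  let ?g = "\<lambda>j. (if j \<in> B then c j else 0) *\<^sub>R Acol M j"
  have "(\<Sum>j\<in>B. c j *\<^sub>R Acol M j) = (\<Sum>j\<in>UNIV <+> UNIV. ?g j)"
    by (simp, rule sum.mono_neutral_cong_left) auto
  also have "\<dots> = (\<Sum>i\<in>UNIV. ?g (Inl i)) + (\<Sum>i\<in>UNIV. ?g (Inr i))"
    by (subst sum.Plus) auto
  also have "(\<Sum>i\<in>UNIV. ?g (Inl i)) = w_part B c"
    unfolding Acol_def w_part_def by (simp add: sum_axis)
  also have "(\<Sum>i\<in>UNIV. ?g (Inr i)) = - (M *v z_part B c)"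
    unfolding z_part_def
    by (simp add: Acol_def matrix_mult_sum sum_negf[symmetric] scalar_mult_eq_scaleR)
  finally show ?thesis by simp
qed

text \<open>A complementary basis contains exactly one index of each pair {i, i+n}:
  it has n elements and no complementary pair.\<close>
lemma compl_basis_exactly_one:
  fixes M :: "real^'n^'n"
  assumes "compl_basis M B"
  shows "Inl i \<in> B \<longleftrightarrow> Inr i \<notin> B"
proof -
  have cB: "complementary B" and card: "card B = CARD('n)"
    using assms unfolding compl_basis_def sub_invertible_def by auto
  have no_pair: "\<not> (Inl k \<in> B \<and> Inr k \<in> B)" for k
    using cB unfolding complementary_def compl_idx_def by force
  define f where "f = (\<lambda>j::'n + 'n. case j of Inl k \<Rightarrow> k | Inr k \<Rightarrow> k)"
  have "inj_on f B"
    by (rule inj_onI) (use no_pair in \<open>auto simp: f_def split: sum.splits\<close>)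
  then have "card (f ` B) = CARD('n)" using card card_image by metis
  then have "f ` B = UNIV" by (simp add: card_subset_eq)
  then obtain j where "j \<in> B" "f j = i" by (metis UNIV_I imageE)
  then have "Inl i \<in> B \<or> Inr i \<in> B" unfolding f_def by (cases j) auto
  then show ?thesis using no_pair by blast
qed

text \<open>Step (3): the cross-complementarity consequence of column sufficiency.
  With d = z1 - z2 one has M d = w1 - w2, so d_i (M d)_i = -(z1_i w2_i + z2_i w1_i)
  is nonpositive for every i, hence zero.\<close>
lemma column_sufficient_cross_complementarity:
  fixes M :: "real^'n^'n" and w1 z1 w2 z2 :: "real^'n"
  assumes cs: "column_sufficient M"
    and eq: "w1 - M *v z1 = w2 - M *v z2"
    and nonneg: "\<And>i. 0 \<le> w1 $ i \<and> 0 \<le> z1 $ i \<and> 0 \<le> w2 $ i \<and> 0 \<le> z2 $ i"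
    and compl1: "\<And>i. w1 $ i * z1 $ i = 0" and compl2: "\<And>i. w2 $ i * z2 $ i = 0"
  shows "z1 $ i * w2 $ i = 0 \<and> z2 $ i * w1 $ i = 0"
proof -
  have Md: "M *v (z1 - z2) = w1 - w2"
    using eq by (simp add: algebra_simps)
  have prod: "(z1 - z2) $ k * (M *v (z1 - z2)) $ k = - (z1 $ k * w2 $ k + z2 $ k * w1 $ k)" for k
  proof -
    have "(z1 - z2) $ k * (M *v (z1 - z2)) $ k
        = w1 $ k * z1 $ k + w2 $ k * z2 $ k - (z1 $ k * w2 $ k + z2 $ k * w1 $ k)"
      unfolding Md by (simp add: algebra_simps)
    then show ?thesis using compl1[of k] compl2[of k] by linarith
  qed
  have cross_nonneg: "0 \<le> z1 $ k * w2 $ k" "0 \<le> z2 $ k * w1 $ k" for k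
    using nonneg[of k] by simp_all
  have "\<forall>k. (z1 - z2) $ k * (M *v (z1 - z2)) $ k \<le> 0"
  proof
    fix k show "(z1 - z2) $ k * (M *v (z1 - z2)) $ k \<le> 0"
      using prod[of k] cross_nonneg[of k] by linarith
  qed
  then have "(z1 - z2) $ i * (M *v (z1 - z2)) $ i = 0"
    using cs unfolding column_sufficient_def by blast
  then show ?thesis using prod[of i] cross_nonneg[of i] by linarith
qed

lemma positive_representation_unique_basis:
  fixes M :: "real^'n^'n"
  assumes cs: "column_sufficient M"
    and B1: "compl_basis M B1" and B2: "compl_basis M B2"
    and c1: "\<forall>j\<in>B1. c1 j > 0" and c2: "\<forall>j\<in>B2. c2 j > 0"
    and same: "(\<Sum>j\<in>B1. c1 j *\<^sub>R Acol M j) = (\<Sum>j\<in>B2. c2 j *\<^sub>R Acol M j)"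
  shows "B1 = B2"
proof -
  let ?w1 = "w_part B1 c1" and ?z1 = "z_part B1 c1"
  let ?w2 = "w_part B2 c2" and ?z2 = "z_part B2 c2"
  have cross: "?z1 $ i * ?w2 $ i = 0 \<and> ?z2 $ i * ?w1 $ i = 0" for i
  proof (rule column_sufficient_cross_complementarity[OF cs])
    show "?w1 - M *v ?z1 = ?w2 - M *v ?z2" using same by (simp only: sum_Acol_eq)
    show "0 \<le> ?w1 $ k \<and> 0 \<le> ?z1 $ k \<and> 0 \<le> ?w2 $ k \<and> 0 \<le> ?z2 $ k" for k
      using c1 c2 by (auto simp: w_part_def z_part_def less_imp_le)
    show "?w1 $ k * ?z1 $ k = 0" for k
      using compl_basis_exactly_one[OF B1, of k] by (simp add: w_part_def z_part_def)
    show "?w2 $ k * ?z2 $ k = 0" for k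
      using compl_basis_exactly_one[OF B2, of k] by (simp add: w_part_def z_part_def)
  qed
  have same_Inl: "Inl i \<in> B1 \<longleftrightarrow> Inl i \<in> B2" for i
  proof (rule ccontr)
    assume "\<not> ?thesis"
    then have "(Inl i \<in> B1 \<and> Inr i \<in> B2) \<or> (Inr i \<in> B1 \<and> Inl i \<in> B2)"
      using compl_basis_exactly_one[OF B1] compl_basis_exactly_one[OF B2] by blast
    then show False
      using cross[of i] c1 c2 by (auto simp: w_part_def z_part_def)
  qed
  show "B1 = B2"
  proof (rule set_eqI)
    fix j show "j \<in> B1 \<longleftrightarrow> j \<in> B2"
      using same_Inl compl_basis_exactly_one[OF B1] compl_basis_exactly_one[OF B2]
      by (cases j) auto
  qed
qed

theorem mainTheorem5:
  fixes M :: "real^'n^'n" and Q :: "real^'d^'n" and q :: "real^'n"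
    and B1 B2 :: "('n + 'n) set"
  assumes "sufficient M"
    and "rank Q = CARD('d)"
    and "general_position M q Q"
    and "compl_basis M B1" and "compl_basis M B2" and "B1 \<noteq> B2"
  shows "rel_interior (critical_domain M q Q B1) \<inter> rel_interior (critical_domain M q Q B2) = {}"
proof (rule ccontr)
  assume "rel_interior (critical_domain M q Q B1) \<inter> rel_interior (critical_domain M q Q B2) \<noteq> {}"
  then obtain x where x1: "x \<in> interior (compl_cone M B1)" and x2: "x \<in> interior (compl_cone M B2)"
    using rel_interior_critical_domain_subset[OF assms(3)] assms(4,5) by blast
  obtain c1 where c1: "x = (\<Sum>j\<in>B1. c1 j *\<^sub>R Acol M j)" "\<forall>j\<in>B1. c1 j > 0"
    using interior_compl_cone_pos[OF x1] .
  obtain c2 where c2: "x = (\<Sum>j\<in>B2. c2 j *\<^sub>R Acol M j)" "\<forall>j\<in>B2. c2 j > 0"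
    using interior_compl_cone_pos[OF x2] .
  have "column_sufficient M" using assms(1) unfolding sufficient_def by simp
  then have "B1 = B2"
    using positive_representation_unique_basis[OF _ assms(4,5) c1(2) c2(2)] c1(1) c2(1)
    by simp
  with assms(6) show False by contradiction
qed

end
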